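(* There is an absolute constant $C_0>0$ such that for every nonconstant harmonic function $u:\mathbb{C}\to\mathbb{R}$ there exists a sequence of discs $D(z_n,r_n)$ ($z_n\in\mathbb{C}$, $r_n>0$) with $u(z_n)=0$ and $M(|u|,z_n,r_n)\le C_0\,M(u,z_n,\tfrac34 r_n)$ for all $n$, and $\lim_{n\to\infty}M(u,z_n,r_n)=+\infty$.
   Context: For a real function $h$, $M(h,z,r)=\sup_{D(z,r)}h$ denotes the supremum of $h$ over the disc $D(z,r)$ of center $z$ and radius $r$. *)

theory Defs
  imports "HOL-Analysis.Analysis"
begin

definition harmonic :: "(complex \<Rightarrow> real) \<Rightarrow> bool" where
  "harmonic u \<longleftrightarrow>
     (\<exists>Du D2u.
        (\<forall>z. (u has_derivative Du z) (at z)) \<and>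
        (\<forall>z v. ((\<lambda>w. Du w v) has_derivative (\<lambda>h. D2u z h v)) (at z)) \<and>
        (\<forall>h v. continuous_on UNIV (\<lambda>z. D2u z h v)) \<and>
        (\<forall>z. D2u z 1 1 + D2u z \<i> \<i> = 0))"

definition Msup :: "(complex \<Rightarrow> real) \<Rightarrow> complex \<Rightarrow> real \<Rightarrow> real" where
  "Msup h z r = (SUP w\<in>ball z r. h w)"

end

theory Submission
  imports Defs "HOL-Complex_Analysis.Complex_Analysis"
begin

text \<open>A harmonic function \<open>u\<close> on the plane is the real part of an entire function \<open>f\<close>, so
  Harnack's inequality and the Borel--Caratheodory inequality apply to it, and by Liouville's
  theorem a nonconstant \<open>u\<close> is unbounded above and has zeros.

  Call the disc of radius \<open>\<rho>\<close> around a zero \<open>z\<close> doubling if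
  \<open>M(|u|, z, 3\<rho>/2) \<le> 12 M(|u|, z, \<rho>)\<close>. If it is not, \<open>|u|\<close> exceeds \<open>12 M(|u|, z, \<rho>)\<close> at some
  \<open>w\<close>, and Harnack's inequality forces a zero \<open>z'\<close> close to \<open>w\<close>; the smaller disc of radius
  \<open>4\<rho>/5\<close> around \<open>z'\<close> then carries twelve times more \<open>|u|\<close>. Iterating, the absence of
  doubling discs would make \<open>|u|\<close> grow like \<open>12\<^sup>n\<close> on discs inside a fixed compact set, so
  doubling discs with arbitrarily large \<open>M(|u|, z, \<rho>)\<close> exist. On such a disc Borel--Caratheodory
  gives \<open>M(|u|, z, \<rho>) \<le> 16 M(u, z, 9\<rho>/8)\<close>, and \<open>r = 3\<rho>/2\<close> yields the theorem with
  \<open>C\<^sub>0 = 192\<close>.\<close>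

section \<open>Harmonic functions as real parts of entire functions\<close>

lemma has_real_derivative_along_line:
  fixes u :: "'a::real_normed_vector \<Rightarrow> real"
  assumes "(u has_derivative Du) (at (c + s *\<^sub>R a))"
  shows "((\<lambda>s. u (c + s *\<^sub>R a)) has_real_derivative Du a) (at s)"
proof -
  have "((\<lambda>s. c + s *\<^sub>R a) has_derivative (\<lambda>h. h *\<^sub>R a)) (at s)"
    by (auto intro!: derivative_eq_intros)
  then have "((\<lambda>s. u (c + s *\<^sub>R a)) has_derivative (\<lambda>h. Du (h *\<^sub>R a))) (at s)"
    using has_derivative_compose[of "\<lambda>s. c + s *\<^sub>R a" _ s UNIV u Du] assms by simp
  moreover have "(\<lambda>h. Du (h *\<^sub>R a)) = (*) (Du a)"
    using linear_cmul[OF has_derivative_linear[OF assms]] by (auto simp: mult.commute)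
  ultimately show ?thesis by (simp add: has_field_derivative_def)
qed

lemma second_difference_mean_value:
  fixes u :: "'a::real_normed_vector \<Rightarrow> real"
  assumes Du: "\<And>z. (u has_derivative Du z) (at z)"
    and D2u: "\<And>z v. ((\<lambda>w. Du w v) has_derivative (\<lambda>h. D2u z h v)) (at z)"
    and t: "t > 0"
  obtains \<xi> where "norm (\<xi> - z) \<le> t * (norm a + norm b)"
    and "u (z + t *\<^sub>R a + t *\<^sub>R b) - u (z + t *\<^sub>R a) - u (z + t *\<^sub>R b) + u z = t\<^sup>2 * D2u \<xi> b a"
proof -
  define g where "g s = u ((z + t *\<^sub>R b) + s *\<^sub>R a) - u (z + s *\<^sub>R a)" for s
  have "(g has_real_derivative Du ((z + t *\<^sub>R b) + s *\<^sub>R a) a - Du (z + s *\<^sub>R a) a) (at s)" for s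
    unfolding g_def by (intro DERIV_diff has_real_derivative_along_line Du)
  with MVT2[OF t, of g "\<lambda>s. Du ((z + t *\<^sub>R b) + s *\<^sub>R a) a - Du (z + s *\<^sub>R a) a"]
  obtain \<sigma> where \<sigma>: "0 < \<sigma>" "\<sigma> < t"
    and g: "g t - g 0 = (t - 0) * (Du ((z + t *\<^sub>R b) + \<sigma> *\<^sub>R a) a - Du (z + \<sigma> *\<^sub>R a) a)"
    by blast
  define k where "k s = Du ((z + \<sigma> *\<^sub>R a) + s *\<^sub>R b) a" for s
  have "(k has_real_derivative D2u ((z + \<sigma> *\<^sub>R a) + s *\<^sub>R b) b a) (at s)" for s
    unfolding k_def by (intro has_real_derivative_along_line D2u)
  with MVT2[OF t, of k "\<lambda>s. D2u ((z + \<sigma> *\<^sub>R a) + s *\<^sub>R b) b a"]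
  obtain \<tau> where \<tau>: "0 < \<tau>" "\<tau> < t"
    and k: "k t - k 0 = (t - 0) * D2u ((z + \<sigma> *\<^sub>R a) + \<tau> *\<^sub>R b) b a"
    by blast
  have "u (z + t *\<^sub>R a + t *\<^sub>R b) - u (z + t *\<^sub>R a) - u (z + t *\<^sub>R b) + u z = g t - g 0"
    unfolding g_def by (simp add: algebra_simps)
  also have "\<dots> = t * (k t - k 0)"
    using g unfolding k_def by (simp add: algebra_simps)
  also have "\<dots> = t\<^sup>2 * D2u ((z + \<sigma> *\<^sub>R a) + \<tau> *\<^sub>R b) b a"
    using k by (simp add: power2_eq_square)
  finally show ?thesis
  proof (rule that[rotated])
    have "norm ((z + \<sigma> *\<^sub>R a) + \<tau> *\<^sub>R b - z) \<le> \<sigma> * norm a + \<tau> * norm b"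
      using \<sigma> \<tau> norm_triangle_ineq[of "\<sigma> *\<^sub>R a" "\<tau> *\<^sub>R b"] by simp
    also have "\<dots> \<le> t * (norm a + norm b)"
      using \<sigma> \<tau> by (simp add: distrib_left add_mono mult_right_mono)
    finally show "norm ((z + \<sigma> *\<^sub>R a) + \<tau> *\<^sub>R b - z) \<le> t * (norm a + norm b)" .
  qed
qed

lemma second_derivative_symmetric:
  fixes u :: "'a::real_normed_vector \<Rightarrow> real"
  assumes Du: "\<And>z. (u has_derivative Du z) (at z)"
    and D2u: "\<And>z v. ((\<lambda>w. Du w v) has_derivative (\<lambda>h. D2u z h v)) (at z)"
    and cont: "\<And>h v. continuous_on UNIV (\<lambda>z. D2u z h v)"
  shows "D2u z a b = D2u z b a"
proof -
  define t where "t n = 1 / real (Suc n)" for n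
  define C where "C = norm a + norm b"
  have "\<exists>\<xi> \<eta>. norm (\<xi> - z) \<le> t n * C \<and> norm (\<eta> - z) \<le> t n * C \<and> D2u \<xi> b a = D2u \<eta> a b" for n
  proof -
    have t: "t n > 0" by (simp add: t_def)
    obtain \<xi> where \<xi>: "norm (\<xi> - z) \<le> t n * C"
      "u (z + t n *\<^sub>R a + t n *\<^sub>R b) - u (z + t n *\<^sub>R a) - u (z + t n *\<^sub>R b) + u z = (t n)\<^sup>2 * D2u \<xi> b a"
      using second_difference_mean_value[OF Du D2u t] unfolding C_def by blast
    obtain \<eta> where \<eta>: "norm (\<eta> - z) \<le> t n * C"
      "u (z + t n *\<^sub>R b + t n *\<^sub>R a) - u (z + t n *\<^sub>R b) - u (z + t n *\<^sub>R a) + u z = (t n)\<^sup>2 * D2u \<eta> a b"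
      using second_difference_mean_value[OF Du D2u t] unfolding C_def by (metis add.commute)
    have "D2u \<xi> b a = D2u \<eta> a b"
      using \<xi>(2) \<eta>(2) t by (simp add: algebra_simps)
    then show ?thesis using \<xi>(1) \<eta>(1) by blast
  qed
  then obtain \<xi> \<eta> where \<xi>\<eta>: "\<And>n. norm (\<xi> n - z) \<le> t n * C" "\<And>n. norm (\<eta> n - z) \<le> t n * C"
    "\<And>n. D2u (\<xi> n) b a = D2u (\<eta> n) a b"
    by metis
  have tC: "(\<lambda>n. t n * C) \<longlonglongrightarrow> 0"
    unfolding t_def using tendsto_mult_left_zero[OF LIMSEQ_inverse_real_of_nat]
    by (simp add: inverse_eq_divide)
  have "(\<lambda>n. \<xi> n - z) \<longlonglongrightarrow> 0" "(\<lambda>n. \<eta> n - z) \<longlonglongrightarrow> 0"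
    by (rule Lim_null_comparison[OF always_eventually tC], use \<xi>\<eta> in blast)+
  then have "\<xi> \<longlonglongrightarrow> z" "\<eta> \<longlonglongrightarrow> z"
    by (simp_all add: LIM_zero_iff)
  then have "(\<lambda>n. D2u (\<xi> n) b a) \<longlonglongrightarrow> D2u z b a" "(\<lambda>n. D2u (\<eta> n) a b) \<longlonglongrightarrow> D2u z a b"
    by (auto intro: continuous_on_tendsto_compose[OF cont])
  then have "(\<lambda>n. D2u (\<xi> n) b a) \<longlonglongrightarrow> D2u z a b"
    by (simp add: \<xi>\<eta>(3))
  with \<open>(\<lambda>n. D2u (\<xi> n) b a) \<longlonglongrightarrow> D2u z b a\<close> show ?thesis
    by (rule LIMSEQ_unique[symmetric])
qed

lemma linear_eq_Re_Im:
  fixes L :: "complex \<Rightarrow> real"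
  assumes "linear L"
  shows "L h = Re h * L 1 + Im h * L \<i>"
proof -
  have "h = Re h *\<^sub>R 1 + Im h *\<^sub>R \<i>"
    by (simp add: complex_eq_iff)
  then have "L h = L (Re h *\<^sub>R 1 + Im h *\<^sub>R \<i>)"
    by simp
  also have "\<dots> = Re h * L 1 + Im h * L \<i>"
    using assms by (simp add: linear_add linear_cmul)
  finally show ?thesis .
qed

text \<open>The conjugated gradient \<open>u\<^sub>x - \<i> u\<^sub>y\<close> satisfies the Cauchy--Riemann equations by
  the Laplace equation and the symmetry of second derivatives, so it has a holomorphic primitive,
  whose real part differs from \<open>u\<close> by a constant.\<close>
lemma harmonic_imp_Re_entire:
  assumes "harmonic u"
  obtains f where "f holomorphic_on UNIV" "\<And>z. Re (f z) = u z"
proof -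
  obtain Du D2u where Du: "\<And>z. (u has_derivative Du z) (at z)"
    and D2u: "\<And>z v. ((\<lambda>w. Du w v) has_derivative (\<lambda>h. D2u z h v)) (at z)"
    and cont: "\<And>h v. continuous_on UNIV (\<lambda>z. D2u z h v)"
    and Laplace: "\<And>z. D2u z 1 1 + D2u z \<i> \<i> = 0"
    using assms unfolding harmonic_def by blast
  define F where "F z = of_real (Du z 1) - \<i> * of_real (Du z \<i>)" for z
  have "(F has_field_derivative (of_real (D2u z 1 1) - \<i> * of_real (D2u z 1 \<i>))) (at z)" for z
  proof -
    have d: "(F has_derivative (\<lambda>h. of_real (D2u z h 1) - \<i> * of_real (D2u z h \<i>))) (at z)"
      unfolding F_def by (auto intro!: derivative_eq_intros D2u)
    have lin: "linear (\<lambda>h. D2u z h 1)" "linear (\<lambda>h. D2u z h \<i>)"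
      using D2u has_derivative_linear by blast+
    have sym: "D2u z \<i> 1 = D2u z 1 \<i>"
      by (rule second_derivative_symmetric[OF Du D2u cont])
    have Laplace': "D2u z \<i> \<i> = - D2u z 1 1"
      using Laplace[of z] by linarith
    have "(\<lambda>h. of_real (D2u z h 1) - \<i> * of_real (D2u z h \<i>)) =
          (*) (of_real (D2u z 1 1) - \<i> * of_real (D2u z 1 \<i>))"
    proof
      fix h
      show "of_real (D2u z h 1) - \<i> * of_real (D2u z h \<i>) =
          (of_real (D2u z 1 1) - \<i> * of_real (D2u z 1 \<i>)) * h"
        using linear_eq_Re_Im[OF lin(1), of h] linear_eq_Re_Im[OF lin(2), of h] sym Laplace'
        by (simp add: complex_eq_iff algebra_simps)
    qed
    then show ?thesis
      using d by (simp add: has_field_derivative_def)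
  qed
  then have "F holomorphic_on UNIV"
    by (auto simp: holomorphic_on_open)
  then obtain g where g: "\<And>z. (g has_field_derivative F z) (at z)"
    using holomorphic_convex_primitive'[OF convex_UNIV open_UNIV] by auto
  have "((\<lambda>z. u z - Re (g z)) has_derivative (\<lambda>h. 0)) (at z within UNIV)" for z
  proof -
    have "((\<lambda>z. u z - Re (g z)) has_derivative (\<lambda>h. Du z h - Re (F z * h))) (at z)"
      using g[of z] unfolding has_field_derivative_def by (auto intro!: derivative_eq_intros Du)
    moreover have "Du z h - Re (F z * h) = 0" for h
      using linear_eq_Re_Im[OF has_derivative_linear[OF Du], of z h] by (simp add: F_def)
    ultimately show ?thesis by simp
  qed
  then have "\<exists>c. \<forall>z\<in>UNIV. u z - Re (g z) = c"
    by (intro has_derivative_zero_constant[OF convex_UNIV])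
  then obtain c where c: "\<And>z. u z - Re (g z) = c"
    by blast
  have "g holomorphic_on UNIV"
    using g by (auto simp: holomorphic_on_open)
  then have "(\<lambda>z. g z + of_real c) holomorphic_on UNIV"
    by (intro holomorphic_intros)
  moreover have "Re (g z + of_real c) = u z" for z
    using c[of z] by simp
  ultimately show ?thesis by (rule that)
qed

section \<open>Harnack, Borel--Caratheodory and Liouville\<close>

lemma connected_nonvanishing_imp_pos:
  fixes u :: "'a::topological_space \<Rightarrow> real"
  assumes "connected S" "continuous_on S u" "\<And>y. y \<in> S \<Longrightarrow> u y \<noteq> 0"
    and "x \<in> S" "u x > 0" "y \<in> S"
  shows "u y > 0"
proof (rule ccontr)
  assume "\<not> u y > 0"
  have "connected (u ` S)"
    using assms(1,2) by (rule connected_continuous_image[rotated])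
  then have "0 \<in> u ` S"
    unfolding connected_iff_interval using \<open>\<not> u y > 0\<close> assms(4-6) by (meson imageI less_le not_le)
  then show False
    using assms(3) by auto
qed

lemma Schwarz_Lemma_ball:
  fixes \<phi> :: "complex \<Rightarrow> complex"
  assumes hol: "\<phi> holomorphic_on ball c R" and "\<phi> c = 0"
    and lt1: "\<And>x. x \<in> ball c R \<Longrightarrow> norm (\<phi> x) < 1" and p: "p \<in> ball c R"
  shows "norm (\<phi> p) * R \<le> dist c p"
proof -
  have R: "R > 0"
    using le_less_trans[OF zero_le_dist p[unfolded mem_ball]] .
  define \<psi> where "\<psi> \<xi> = \<phi> (c + of_real R * \<xi>)" for \<xi>
  have inb: "c + of_real R * \<xi> \<in> ball c R" if "norm \<xi> < 1" for \<xi>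
    using that R by (simp add: dist_norm norm_mult)
  have "\<psi> holomorphic_on ball 0 1"
    unfolding \<psi>_def
    by (rule holomorphic_on_compose_gen[OF _ hol, unfolded o_def]) (auto intro!: holomorphic_intros inb)
  moreover have "\<psi> 0 = 0"
    using \<open>\<phi> c = 0\<close> by (simp add: \<psi>_def)
  moreover have "\<And>\<xi>. norm \<xi> < 1 \<Longrightarrow> norm (\<psi> \<xi>) < 1"
    unfolding \<psi>_def using lt1 inb by blast
  moreover have "norm ((p - c) / of_real R) < 1"
    using p R by (simp add: dist_norm norm_divide norm_minus_commute)
  ultimately have "norm (\<psi> ((p - c) / of_real R)) \<le> norm ((p - c) / of_real R)"
    by (rule Schwarz_Lemma(1))
  then show ?thesis
    using R by (simp add: \<psi>_def dist_norm norm_divide norm_minus_commute field_simps)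
qed

lemma norm_diff_of_real_less_norm_add:
  fixes q :: complex
  assumes "Re q > 0" "a > 0"
  shows "norm (q - of_real a) < norm (q + of_real a)"
proof -
  have "(Re q - a)\<^sup>2 + (Im q)\<^sup>2 < (Re q + a)\<^sup>2 + (Im q)\<^sup>2"
    using assms by (simp add: power2_eq_square algebra_simps)
  then have "(norm (q - of_real a))\<^sup>2 < (norm (q + of_real a))\<^sup>2"
    by (simp add: cmod_power2)
  then show ?thesis
    by (simp add: power_less_imp_less_base)
qed

lemma Re_lower_bound_of_Cayley:
  fixes q :: complex
  assumes "Re q > 0" "a > 0" "t \<le> 1" and Cayley: "norm (q - of_real a) \<le> t * norm (q + of_real a)"
  shows "a - Re q \<le> t * (Re q + a)"
proof -
  have "0 < Re (q + of_real a)"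
    using assms(1,2) by simp
  then have "0 < norm (q + of_real a)"
    using complex_Re_le_cmod order_less_le_trans by blast
  then have t: "t \<ge> 0"
    using order_trans[OF norm_ge_zero Cayley] by (simp add: zero_le_mult_iff)
  have "(norm (q - of_real a))\<^sup>2 \<le> (t * norm (q + of_real a))\<^sup>2"
    by (rule power_mono[OF Cayley norm_ge_zero])
  then have "(Re q - a)\<^sup>2 + (Im q)\<^sup>2 \<le> t\<^sup>2 * (Re q + a)\<^sup>2 + t\<^sup>2 * (Im q)\<^sup>2"
    by (simp add: cmod_power2 power_mult_distrib distrib_left)
  moreover have "t\<^sup>2 * (Im q)\<^sup>2 \<le> (Im q)\<^sup>2"
    using t \<open>t \<le> 1\<close> by (simp add: mult_left_le_one_le power_le_one)
  moreover have "(t * (Re q + a))\<^sup>2 = t\<^sup>2 * (Re q + a)\<^sup>2" "(a - Re q)\<^sup>2 = (Re q - a)\<^sup>2"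
    by (simp_all add: power_mult_distrib power2_commute)
  ultimately have "(a - Re q)\<^sup>2 \<le> (t * (Re q + a))\<^sup>2"
    by linarith
  then show ?thesis
    by (rule power2_le_imp_le) (use t assms(1,2) in simp)
qed

text \<open>The proof maps the right half-plane onto the unit disc by a Cayley transform and
  applies the Schwarz lemma.\<close>
lemma Harnack_inequality:
  fixes f :: "complex \<Rightarrow> complex"
  assumes hol: "f holomorphic_on ball w d" and pos: "\<And>x. x \<in> ball w d \<Longrightarrow> Re (f x) > 0"
    and p: "p \<in> ball w d"
  shows "Re (f w) * (d - dist w p) \<le> Re (f p) * (d + dist w p)"
proof -
  have w: "w \<in> ball w d"
    using le_less_trans[OF zero_le_dist p[unfolded mem_ball]] by simp
  define a where "a = Re (f w)"
  have a: "a > 0"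
    using pos[OF w] by (simp add: a_def)
  define g where "g x = f x - \<i> * of_real (Im (f w))" for x
  have Re_g: "Re (g x) = Re (f x)" for x
    by (simp add: g_def)
  define \<phi> where "\<phi> x = (g x - of_real a) / (g x + of_real a)" for x
  have nz: "g x + of_real a \<noteq> 0" if "x \<in> ball w d" for x
    using pos[OF that] a Re_g[of x] by (auto simp: complex_eq_iff)
  have "\<phi> holomorphic_on ball w d"
    unfolding \<phi>_def using nz unfolding g_def by (intro holomorphic_intros hol) auto
  moreover have "g w = of_real a"
    by (simp add: g_def a_def complex_eq_iff)
  then have "\<phi> w = 0"
    by (simp add: \<phi>_def)
  moreover have lt1: "norm (\<phi> x) < 1" if "x \<in> ball w d" for x
    using norm_diff_of_real_less_norm_add[of "g x" a] pos[OF that] Re_g a nz[OF that]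
    by (simp add: \<phi>_def norm_divide divide_less_eq)
  ultimately have Schwarz: "norm (\<phi> p) * d \<le> dist w p"
    using p by (rule Schwarz_Lemma_ball)
  have d: "d > 0"
    using w by simp
  have "a - Re (g p) \<le> norm (\<phi> p) * (Re (g p) + a)"
    using nz[OF p] pos[OF p] Re_g a lt1[OF p]
    by (intro Re_lower_bound_of_Cayley) (auto simp: \<phi>_def norm_divide)
  then have "d * (a - Re (g p)) \<le> d * (norm (\<phi> p) * (Re (g p) + a))"
    using d by (intro mult_left_mono) auto
  also have "\<dots> = (norm (\<phi> p) * d) * (Re (g p) + a)"
    by simp
  also have "\<dots> \<le> dist w p * (Re (g p) + a)"
    using Schwarz pos[OF p] Re_g a by (intro mult_right_mono) auto
  finally show ?thesis
    by (simp add: a_def Re_g algebra_simps)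
qed

lemma Harnack_inequality_abs_Re:
  fixes f :: "complex \<Rightarrow> complex"
  assumes hol: "f holomorphic_on ball w d" and nz: "\<And>x. x \<in> ball w d \<Longrightarrow> Re (f x) \<noteq> 0"
    and p: "p \<in> ball w d"
  shows "\<bar>Re (f w)\<bar> * (d - dist w p) \<le> \<bar>Re (f p)\<bar> * (d + dist w p)"
proof -
  have w: "w \<in> ball w d"
    using le_less_trans[OF zero_le_dist p[unfolded mem_ball]] by simp
  have cont: "continuous_on (ball w d) (\<lambda>x. Re (f x))" "continuous_on (ball w d) (\<lambda>x. - Re (f x))"
    using holomorphic_on_imp_continuous_on[OF hol] by (auto intro!: continuous_intros)
  show ?thesis
  proof (cases "Re (f w) > 0")
    case True
    then have pos: "Re (f x) > 0" if "x \<in> ball w d" for x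
      using connected_nonvanishing_imp_pos[OF connected_ball cont(1)] nz w that by blast
    then show ?thesis
      using Harnack_inequality[OF hol pos p] True pos[OF p] by simp
  next
    case False
    then have "- Re (f w) > 0"
      using nz[OF w] by simp
    then have neg: "Re (- f x) > 0" if "x \<in> ball w d" for x
      using connected_nonvanishing_imp_pos[OF connected_ball cont(2), of w x] nz w that by simp
    have "(\<lambda>x. - f x) holomorphic_on ball w d"
      using hol by (intro holomorphic_intros)
    then show ?thesis
      using Harnack_inequality[OF _ neg p] False neg[OF p] by simp
  qed
qed

lemma Borel_Caratheodory:
  fixes g :: "complex \<Rightarrow> complex"
  assumes hol: "g holomorphic_on ball z R" and g0: "g z = 0"
    and le: "\<And>x. x \<in> ball z R \<Longrightarrow> Re (g x) \<le> A" and p: "p \<in> ball z R"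
  shows "norm (g p) * (R - dist z p) \<le> 2 * A * dist z p"
proof -
  have A: "A \<ge> 0"
    using le[of z] g0 le_less_trans[OF zero_le_dist p[unfolded mem_ball]] by simp
  \<comment> \<open>\<open>B > A\<close> makes \<open>\<phi>\<close> map into the open unit disc, as the Schwarz lemma requires\<close>
  have strict: "norm (g p) * (R - dist z p) \<le> 2 * B * dist z p" if "A < B" for B
  proof -
    define \<phi> where "\<phi> x = g x / (of_real (2 * B) - g x)" for x
    have Re_lt: "Re (of_real B - g x) > 0" if "x \<in> ball z R" for x
      using le[OF that] \<open>A < B\<close> by simp
    have nz: "of_real (2 * B) - g x \<noteq> 0" if "x \<in> ball z R" for x
      using Re_lt[OF that] A \<open>A < B\<close> by (auto simp: complex_eq_iff)
    have "\<phi> holomorphic_on ball z R"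
      unfolding \<phi>_def using nz by (intro holomorphic_intros hol) auto
    moreover have "\<phi> z = 0"
      by (simp add: \<phi>_def g0)
    moreover have "norm (\<phi> x) < 1" if "x \<in> ball z R" for x
      using norm_diff_of_real_less_norm_add[OF Re_lt[OF that], of B] A \<open>A < B\<close> nz[OF that]
      by (simp add: \<phi>_def norm_divide divide_less_eq norm_minus_commute algebra_simps)
    ultimately have Schwarz: "norm (\<phi> p) * R \<le> dist z p"
      using p by (rule Schwarz_Lemma_ball)
    have "norm (g p) = norm (\<phi> p) * norm (of_real (2 * B) - g p)"
      using nz[OF p] by (simp add: \<phi>_def norm_divide)
    also have "\<dots> \<le> norm (\<phi> p) * (2 * B + norm (g p))"
      using A \<open>A < B\<close> by (intro mult_left_mono) (auto intro: order.trans[OF norm_triangle_ineq4])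
    finally have "R * norm (g p) \<le> R * (norm (\<phi> p) * (2 * B + norm (g p)))"
      using p by (intro mult_left_mono) (auto intro: order.trans[OF zero_le_dist] less_imp_le)
    also have "\<dots> = (norm (\<phi> p) * R) * (2 * B + norm (g p))"
      by simp
    also have "\<dots> \<le> dist z p * (2 * B + norm (g p))"
      using Schwarz A \<open>A < B\<close> by (intro mult_right_mono) auto
    finally show ?thesis
      by (simp add: algebra_simps)
  qed
  show ?thesis
  proof (rule tendsto_lowerbound)
    show "((\<lambda>B. 2 * B * dist z p) \<longlongrightarrow> 2 * A * dist z p) (at_right A)"
      by (intro tendsto_intros)
    show "\<forall>\<^sub>F B in at_right A. norm (g p) * (R - dist z p) \<le> 2 * B * dist z p"
      using eventually_at_right_less by (rule eventually_mono) (rule strict)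
  qed simp
qed

lemma Re_entire_bdd_above_imp_constant:
  fixes f :: "complex \<Rightarrow> complex"
  assumes hol: "f holomorphic_on UNIV" and le: "\<And>w. Re (f w) \<le> T"
  obtains c where "\<And>w. Re (f w) = c"
proof -
  have "bounded (range (\<lambda>w. exp (f w)))"
    unfolding bounded_iff using le by (intro exI[of _ "exp T"]) auto
  moreover have "(\<lambda>w. exp (f w)) holomorphic_on UNIV"
    using hol by (intro holomorphic_intros)
  ultimately have "(\<lambda>w. exp (f w)) constant_on UNIV"
    using Liouville_theorem by blast
  then obtain k where "\<And>w. exp (f w) = k"
    unfolding constant_on_def by blast
  then have "Re (f w) = ln (norm k)" for w
    by (metis norm_exp_eq_Re ln_exp)
  then show ?thesis
    using that by blast
qed

section \<open>Doubling discs\<close>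

lemma bdd_above_image_ball:
  fixes h :: "'a::heine_borel \<Rightarrow> real"
  assumes "continuous_on UNIV h"
  shows "bdd_above (h ` ball z r)"
proof -
  have "compact (h ` cball z r)"
    using assms by (intro compact_continuous_image) (auto intro: continuous_on_subset)
  then have "bdd_above (h ` cball z r)"
    by (intro bounded_imp_bdd_above compact_imp_bounded)
  then show ?thesis
    by (rule bdd_above_mono) auto
qed

lemma Msup_upper:
  assumes "bdd_above (h ` ball z r)" "w \<in> ball z r"
  shows "h w \<le> Msup h z r"
  unfolding Msup_def using assms by (rule cSUP_upper2) simp

lemma Msup_least:
  assumes "r > 0" "\<And>w. w \<in> ball z r \<Longrightarrow> h w \<le> B"
  shows "Msup h z r \<le> B"
  unfolding Msup_def using assms by (intro cSUP_least) auto

lemma Msup_mono: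
  assumes "bdd_above (h ` ball z r')" "0 < r" "r \<le> r'"
  shows "Msup h z r \<le> Msup h z r'"
  using assms by (intro Msup_least Msup_upper) auto

lemma exists_dist_between:
  fixes a b :: "'a::real_normed_vector"
  assumes "0 \<le> t" "t \<le> dist a b"
  obtains p where "dist a p = t" "dist p b = dist a b - t"
proof (cases "a = b")
  case True
  then show ?thesis
    using assms that[of a] by simp
next
  case False
  define c where "c = t / dist a b"
  have c: "0 \<le> c" "c \<le> 1"
    using assms False by (auto simp: c_def)
  define p where "p = a + c *\<^sub>R (b - a)"
  have "dist a p = c * dist a b"
    using c by (simp add: p_def dist_norm norm_minus_commute)
  moreover have "p - b = (1 - c) *\<^sub>R (a - b)"
    by (simp add: p_def algebra_simps)
  then have "dist p b = (1 - c) * dist a b"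
    using c by (simp add: dist_norm)
  ultimately show ?thesis
    using False that by (simp add: c_def algebra_simps)
qed

locale entire_real_part =
  fixes f :: "complex \<Rightarrow> complex" and u :: "complex \<Rightarrow> real"
  assumes holomorphic: "f holomorphic_on UNIV" and Re_f: "\<And>z. Re (f z) = u z"
begin

abbreviation Mabs :: "complex \<Rightarrow> real \<Rightarrow> real" where
  "Mabs \<equiv> Msup (\<lambda>w. \<bar>u w\<bar>)"

lemma continuous: "continuous_on UNIV u"
proof -
  have "continuous_on UNIV (\<lambda>z. Re (f z))"
    using holomorphic_on_imp_continuous_on[OF holomorphic] by (intro continuous_intros)
  then show ?thesis
    by (simp add: Re_f)
qed

lemma Msup_u_upper: "w \<in> ball z r \<Longrightarrow> u w \<le> Msup u z r"
  by (intro Msup_upper bdd_above_image_ball continuous)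

lemma Mabs_upper: "w \<in> ball z r \<Longrightarrow> \<bar>u w\<bar> \<le> Mabs z r"
  by (intro Msup_upper bdd_above_image_ball continuous_intros continuous)

lemma Mabs_nonneg: "u z = 0 \<Longrightarrow> r > 0 \<Longrightarrow> Mabs z r \<ge> 0"
  using Mabs_upper[of z z r] by simp

lemma Mabs_le_of_subdisc:
  assumes "r > 0" "dist z0 z + r \<le> R"
  shows "Mabs z r \<le> Mabs z0 R"
proof (rule Msup_least[OF \<open>r > 0\<close>])
  fix w assume "w \<in> ball z r"
  then have "w \<in> ball z0 R"
    using assms(2) dist_triangle[of z0 w z] by (simp add: dist_commute)
  then show "\<bar>u w\<bar> \<le> Mabs z0 R"
    by (rule Mabs_upper)
qed

lemma Harnack_abs:
  assumes "\<And>y. y \<in> ball w d \<Longrightarrow> u y \<noteq> 0" "p \<in> ball w d"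
  shows "\<bar>u w\<bar> * (d - dist w p) \<le> \<bar>u p\<bar> * (d + dist w p)"
  using Harnack_inequality_abs_Re[OF holomorphic_on_subset[OF holomorphic]] assms
  by (simp add: Re_f)

lemma unbounded_above:
  assumes "\<nexists>c. \<forall>z. u z = c"
  obtains w where "T < u w"
proof (rule ccontr)
  assume "\<not> thesis"
  then have "Re (f w) \<le> T" for w
    using that by (metis Re_f not_le)
  then obtain c where "\<And>w. Re (f w) = c"
    using Re_entire_bdd_above_imp_constant[OF holomorphic] by blast
  then show False
    using assms by (auto simp: Re_f)
qed

end

lemma entire_real_part_uminus:
  assumes "entire_real_part f u"
  shows "entire_real_part (\<lambda>z. - f z) (\<lambda>z. - u z)"
  using assms unfolding entire_real_part_def by (auto intro: holomorphic_intros)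

context entire_real_part
begin

lemma exists_zero:
  assumes "\<nexists>c. \<forall>z. u z = c"
  obtains z where "u z = 0"
proof -
  interpret neg: entire_real_part "\<lambda>z. - f z" "\<lambda>z. - u z"
    by (rule entire_real_part_uminus) unfold_locales
  have "\<nexists>c. \<forall>z. - u z = c"
  proof
    assume "\<exists>c. \<forall>z. - u z = c"
    then obtain c where "\<And>z. u z = - c"
      by (metis minus_minus)
    with assms show False
      by blast
  qed
  then obtain b where "0 < - u b"
    using neg.unbounded_above by metis
  obtain a where "0 < u a"
    using unbounded_above[OF assms] by metis
  show ?thesis
  proof (rule ccontr)
    assume "\<not> thesis"
    then have "u y \<noteq> 0" for y
      using that by blast
    then have "0 < u b"
      using connected_nonvanishing_imp_pos[OF connected_UNIV continuous] \<open>0 < u a\<close> by blast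
    with \<open>0 < - u b\<close> show False
      by simp
  qed
qed

text \<open>If the nearest zero \<open>z'\<close> were far from \<open>w\<close>, then \<open>u\<close> would keep its sign on \<open>ball w d\<close>,
  \<open>d = dist w z'\<close>, and Harnack's inequality at a point \<open>p\<close> of \<open>ball z \<rho>\<close> on the segment from
  \<open>z\<close> to \<open>w\<close> would bound \<open>\<bar>u w\<bar>\<close> by \<open>11 * \<bar>u p\<bar>\<close>.\<close>
lemma zero_near_large_value:
  assumes z: "u z = 0" and w: "w \<in> ball z (3 * \<rho> / 2)" and large: "12 * Mabs z \<rho> < \<bar>u w\<bar>"
  obtains z' where "u z' = 0" "dist w z' < 3 * \<rho> / 4"
proof -
  define h where "h = Mabs z \<rho>"
  have \<rho>: "\<rho> > 0"
    using w zero_le_dist[of z w] unfolding mem_ball by linarith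
  have h: "h \<ge> 0"
    using Mabs_nonneg[OF z \<rho>] by (simp add: h_def)
  have "closed {x. u x = 0}"
    using closed_Collect_eq[OF continuous continuous_on_const] by simp
  moreover have "{x. u x = 0} \<noteq> {}"
    using z by blast
  ultimately obtain z' where z': "z' \<in> {x. u x = 0}"
    and nearest: "\<And>y. y \<in> {x. u x = 0} \<Longrightarrow> dist w z' \<le> dist w y"
    by (rule distance_attains_inf[where a = w]) blast
  define d where "d = dist w z'"
  have "d < 3 * \<rho> / 4"
  proof (rule ccontr)
    assume "\<not> d < 3 * \<rho> / 4"
    then have d: "3 * \<rho> / 4 \<le> d"
      by simp
    have no_zero: "u y \<noteq> 0" if "y \<in> ball w d" for y
      using that nearest[of y] by (auto simp: d_def)
    have "\<rho> \<le> dist z w"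
      using Mabs_upper[of w z \<rho>] large h by (fastforce simp: h_def)
    then obtain p where p: "dist z p = 7 * \<rho> / 8" "dist p w = dist z w - 7 * \<rho> / 8"
      using exists_dist_between[of "7 * \<rho> / 8" z w] \<rho> by auto
    define s where "s = dist w p"
    have s: "0 \<le> s" "6 * s \<le> 5 * d"
      using p(2) w d by (simp add: s_def, simp add: s_def dist_commute)
    have ds: "0 < d - s"
      using s d \<rho> by linarith
    then have "p \<in> ball w d"
      by (simp add: s_def)
    then have "\<bar>u w\<bar> * (d - s) \<le> \<bar>u p\<bar> * (d + s)"
      unfolding s_def using Harnack_abs no_zero by blast
    also have "\<dots> \<le> h * (d + s)"
      using Mabs_upper[of p z \<rho>] p(1) \<rho> s ds by (intro mult_right_mono) (auto simp: h_def)
    also have "\<dots> \<le> h * (12 * (d - s))"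
      using h s by (intro mult_left_mono) auto
    also have "\<dots> = (12 * h) * (d - s)"
      by simp
    also have "\<dots> < \<bar>u w\<bar> * (d - s)"
      using mult_strict_right_mono[OF large ds] unfolding h_def .
    finally show False
      by simp
  qed
  then show ?thesis
    using that z' by (simp add: d_def)
qed

lemma Mabs_growth_step:
  assumes z: "u z = 0" and \<rho>: "\<rho> > 0" and growth: "12 * Mabs z \<rho> < Mabs z (3 * \<rho> / 2)"
  obtains z' where "u z' = 0" "dist z z' < 9 * \<rho> / 4" "12 * Mabs z \<rho> < Mabs z' (4 * \<rho> / 5)"
proof -
  have "\<exists>w \<in> ball z (3 * \<rho> / 2). 12 * Mabs z \<rho> < \<bar>u w\<bar>"
  proof (rule ccontr)
    assume "\<not> ?thesis"
    then have "Mabs z (3 * \<rho> / 2) \<le> 12 * Mabs z \<rho>"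
      using \<rho> by (intro Msup_least) (auto simp: not_less)
    with growth show False
      by linarith
  qed
  then obtain w where w: "w \<in> ball z (3 * \<rho> / 2)" "12 * Mabs z \<rho> < \<bar>u w\<bar>"
    by blast
  then obtain z' where z': "u z' = 0" "dist w z' < 3 * \<rho> / 4"
    using zero_near_large_value[OF z] by blast
  have "\<bar>u w\<bar> \<le> Mabs z' (4 * \<rho> / 5)"
    using z'(2) \<rho> by (intro Mabs_upper) (simp add: dist_commute)
  moreover have "dist z z' < 9 * \<rho> / 4"
    using dist_triangle[of z z' w] w(1) z'(2) by simp
  ultimately show ?thesis
    using that z' w(2) by force
qed

lemma Mabs_iterated_growth:
  assumes no_doubling: "\<And>z \<rho>. u z = 0 \<Longrightarrow> \<rho> > 0 \<Longrightarrow> Mabs z0 \<rho>0 \<le> Mabs z \<rho> \<Longrightarrow>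
      12 * Mabs z \<rho> < Mabs z (3 * \<rho> / 2)"
    and z0: "u z0 = 0" and \<rho>0: "\<rho>0 > 0" and pos: "Mabs z0 \<rho>0 > 0"
  shows "\<exists>z. u z = 0 \<and> dist z0 z \<le> 45 / 4 * \<rho>0 * (1 - (4 / 5) ^ n)
    \<and> 12 ^ n * Mabs z0 \<rho>0 \<le> Mabs z (\<rho>0 * (4 / 5) ^ n)"
proof (induction n)
  case 0
  then show ?case
    using z0 by auto
next
  case (Suc n)
  then obtain z where z: "u z = 0" "dist z0 z \<le> 45 / 4 * \<rho>0 * (1 - (4 / 5) ^ n)"
    "12 ^ n * Mabs z0 \<rho>0 \<le> Mabs z (\<rho>0 * (4 / 5) ^ n)"
    by blast
  define \<rho> where "\<rho> = \<rho>0 * (4 / 5) ^ n"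
  have \<rho>: "\<rho> > 0"
    using \<rho>0 by (simp add: \<rho>_def)
  have "Mabs z0 \<rho>0 \<le> 12 ^ n * Mabs z0 \<rho>0"
    using pos by simp
  then obtain z' where z': "u z' = 0" "dist z z' < 9 * \<rho> / 4" "12 * Mabs z \<rho> < Mabs z' (4 * \<rho> / 5)"
    using Mabs_growth_step[OF z(1) \<rho> no_doubling[OF z(1) \<rho>]] z(3) by (force simp: \<rho>_def)
  have "dist z0 z' \<le> 45 / 4 * \<rho>0 * (1 - (4 / 5) ^ n) + 9 * \<rho> / 4"
    using dist_triangle[of z0 z' z] z(2) z'(2) by simp
  also have "\<dots> = 45 / 4 * \<rho>0 * (1 - (4 / 5) ^ Suc n)"
    by (simp add: \<rho>_def field_simps)
  finally have "dist z0 z' \<le> 45 / 4 * \<rho>0 * (1 - (4 / 5) ^ Suc n)" .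
  moreover have "12 ^ Suc n * Mabs z0 \<rho>0 \<le> Mabs z' (\<rho>0 * (4 / 5) ^ Suc n)"
    using z(3) z'(3) by (simp add: \<rho>_def mult_ac)
  ultimately show ?case
    using z'(1) by blast
qed

text \<open>Without such a disc, iterating \<open>Mabs_growth_step\<close> would produce discs inside
  \<open>ball z0 (13 * \<rho>0)\<close> on which \<open>Mabs\<close> grows like \<open>12 ^ n\<close>.\<close>
lemma doubling_disc_exists:
  assumes z0: "u z0 = 0" and \<rho>0: "\<rho>0 > 0" and pos: "Mabs z0 \<rho>0 > 0"
  obtains z \<rho> where "u z = 0" "\<rho> > 0" "Mabs z (3 * \<rho> / 2) \<le> 12 * Mabs z \<rho>" "Mabs z0 \<rho>0 \<le> Mabs z \<rho>"
proof (rule ccontr)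
  assume "\<not> thesis"
  then have no_doubling: "\<And>z \<rho>. u z = 0 \<Longrightarrow> \<rho> > 0 \<Longrightarrow> Mabs z0 \<rho>0 \<le> Mabs z \<rho> \<Longrightarrow>
      12 * Mabs z \<rho> < Mabs z (3 * \<rho> / 2)"
    using that by (meson not_le)
  have bounded: "12 ^ n * Mabs z0 \<rho>0 \<le> Mabs z0 (13 * \<rho>0)" for n
  proof -
    obtain z where z: "dist z0 z \<le> 45 / 4 * \<rho>0 * (1 - (4 / 5) ^ n)"
      "12 ^ n * Mabs z0 \<rho>0 \<le> Mabs z (\<rho>0 * (4 / 5) ^ n)"
      using Mabs_iterated_growth[OF no_doubling z0 \<rho>0 pos] by blast
    have "(4 / 5 :: real) ^ n \<le> 1"
      by (simp add: power_le_one)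
    then have "\<rho>0 * (4 / 5) ^ n \<le> \<rho>0" "45 / 4 * \<rho>0 * (1 - (4 / 5) ^ n) \<le> 45 / 4 * \<rho>0"
      using \<rho>0 by (simp_all add: mult_left_le)
    then have "dist z0 z + \<rho>0 * (4 / 5) ^ n \<le> 13 * \<rho>0"
      using z(1) \<rho>0 by linarith
    then have "Mabs z (\<rho>0 * (4 / 5) ^ n) \<le> Mabs z0 (13 * \<rho>0)"
      using \<rho>0 by (intro Mabs_le_of_subdisc) auto
    then show ?thesis
      using z(2) by linarith
  qed
  obtain n where "Mabs z0 (13 * \<rho>0) / Mabs z0 \<rho>0 < 12 ^ n"
    using real_arch_pow[of 12] by fastforce
  then show False
    using bounded[of n] pos by (simp add: divide_less_eq)
qed

lemma Mabs_le_Msup: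
  assumes z: "u z = 0" and \<rho>: "\<rho> > 0"
  shows "Mabs z \<rho> \<le> 16 * Msup u z (9 * \<rho> / 8)"
proof (rule Msup_least[OF \<rho>])
  fix p assume p: "p \<in> ball z \<rho>"
  define R where "R = 9 * \<rho> / 8"
  define A where "A = Msup u z R"
  define s where "s = dist z p"
  have s: "0 \<le> s" "s < \<rho>"
    using p by (auto simp: s_def)
  have A: "A \<ge> 0"
    using Msup_u_upper[of z z R] z \<rho> by (simp add: A_def R_def)
  have "(\<lambda>x. f x - f z) holomorphic_on ball z R"
    by (intro holomorphic_intros holomorphic_on_subset[OF holomorphic]) auto
  moreover have "Re (f x - f z) \<le> A" if "x \<in> ball z R" for x
    using Msup_u_upper[OF that] z by (simp add: Re_f A_def)
  ultimately have BC: "norm (f p - f z) * (R - s) \<le> 2 * A * s"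
    using Borel_Caratheodory[of "\<lambda>x. f x - f z" z R A p] p \<rho> by (simp add: R_def s_def)
  have "\<bar>u p\<bar> \<le> norm (f p - f z)"
    using abs_Re_le_cmod[of "f p - f z"] z by (simp add: Re_f)
  then have "\<bar>u p\<bar> * (R - s) \<le> norm (f p - f z) * (R - s)"
    using s by (intro mult_right_mono) (auto simp: R_def)
  also have "\<dots> \<le> 2 * A * s"
    by (rule BC)
  also have "\<dots> \<le> (16 * A) * (R - s)"
    using A s by (simp add: R_def algebra_simps mult_left_mono)
  finally have "\<bar>u p\<bar> * (R - s) \<le> (16 * A) * (R - s)" .
  moreover have "R - s > 0"
    using s by (simp add: R_def)
  ultimately show "\<bar>u p\<bar> \<le> 16 * Msup u z (9 * \<rho> / 8)"
    by (simp add: A_def R_def)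
qed

lemma large_doubling_disc_exists:
  assumes z0: "u z0 = 0" and nonconstant: "\<nexists>c. \<forall>z. u z = c"
  obtains z r where "u z = 0" "r > 0" "Mabs z r \<le> 192 * Msup u z (3 / 4 * r)" "B \<le> Msup u z r"
proof -
  obtain w where w: "192 * \<bar>B\<bar> < u w"
    using unbounded_above[OF nonconstant] by blast
  define \<rho>0 where "\<rho>0 = dist z0 w + 1"
  have \<rho>0: "\<rho>0 > 0"
    by (simp add: \<rho>0_def add_nonneg_pos)
  have "\<bar>u w\<bar> \<le> Mabs z0 \<rho>0"
    by (intro Mabs_upper) (simp add: \<rho>0_def)
  with w have large: "192 * \<bar>B\<bar> < Mabs z0 \<rho>0"
    by linarith
  then have "Mabs z0 \<rho>0 > 0"
    using abs_ge_zero[of B] by linarith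
  then obtain z \<rho> where z: "u z = 0" "\<rho> > 0" and doubling: "Mabs z (3 * \<rho> / 2) \<le> 12 * Mabs z \<rho>"
    and "Mabs z0 \<rho>0 \<le> Mabs z \<rho>"
    by (rule doubling_disc_exists[OF z0 \<rho>0])
  define r where "r = 3 * \<rho> / 2"
  have r: "r > 0" "3 / 4 * r = 9 * \<rho> / 8"
    using z(2) by (simp_all add: r_def)
  have "Mabs z r \<le> 12 * Mabs z \<rho>"
    using doubling by (simp add: r_def)
  also have "\<dots> \<le> 192 * Msup u z (3 / 4 * r)"
    using Mabs_le_Msup[OF z] unfolding r(2) by linarith
  finally have "Mabs z r \<le> 192 * Msup u z (3 / 4 * r)" .
  moreover have "Msup u z (3 / 4 * r) \<le> Msup u z r"
    using r by (intro Msup_mono bdd_above_image_ball continuous) auto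
  moreover have "Mabs z \<rho> \<le> Mabs z r"
    using z(2) by (intro Msup_mono bdd_above_image_ball continuous_intros continuous) (auto simp: r_def)
  then have "192 * \<bar>B\<bar> < Mabs z r"
    using large \<open>Mabs z0 \<rho>0 \<le> Mabs z \<rho>\<close> by linarith
  ultimately show ?thesis
    using that z r(1) by force
qed

end

theorem corollary5:
  shows "\<exists>C0::real. C0 > 0 \<and>
    (\<forall>u. harmonic u \<and> \<not> (\<exists>c. \<forall>z. u z = c) \<longrightarrow>
      (\<exists>(zs::nat \<Rightarrow> complex) (rs::nat \<Rightarrow> real).
         (\<forall>n. rs n > 0 \<and> u (zs n) = 0 \<and>
              Msup (\<lambda>w. \<bar>u w\<bar>) (zs n) (rs n) \<le> C0 * Msup u (zs n) (3/4 * rs n)) \<and>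
         filterlim (\<lambda>n. Msup u (zs n) (rs n)) at_top sequentially))"
proof (intro exI[of _ 192] conjI allI impI)
  fix u assume "harmonic u \<and> \<not> (\<exists>c. \<forall>z. u z = c)"
  then obtain f where "entire_real_part f u" and nonconstant: "\<nexists>c. \<forall>z. u z = c"
    using harmonic_imp_Re_entire unfolding entire_real_part_def by metis
  interpret entire_real_part f u
    by fact
  obtain z0 where z0: "u z0 = 0"
    using exists_zero[OF nonconstant] .
  have "\<exists>z r. r > 0 \<and> u z = 0 \<and> Mabs z r \<le> 192 * Msup u z (3 / 4 * r) \<and> real n \<le> Msup u z r" for n
    using large_doubling_disc_exists[OF z0 nonconstant] by metis
  then obtain zs rs where discs: "\<And>n. rs n > 0 \<and> u (zs n) = 0 \<and>
      Mabs (zs n) (rs n) \<le> 192 * Msup u (zs n) (3 / 4 * rs n) \<and> real n \<le> Msup u (zs n) (rs n)"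
    by metis
  have "filterlim (\<lambda>n. Msup u (zs n) (rs n)) at_top sequentially"
    using discs by (intro filterlim_at_top_mono[OF filterlim_real_sequentially]) auto
  with discs show "\<exists>zs rs. (\<forall>n. rs n > 0 \<and> u (zs n) = 0 \<and>
      Mabs (zs n) (rs n) \<le> 192 * Msup u (zs n) (3 / 4 * rs n)) \<and>
      filterlim (\<lambda>n. Msup u (zs n) (rs n)) at_top sequentially"
    by blast
qed simp

end
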